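(* Assume Conditions (A), (P) and (Ah) from the context. Then (i) $\|A_hP_hA^{-1}\|_{\mathcal L(H)}\le C$ and (ii) $\|A_{h,\ell}A_h^{-1}P_h\|_{\mathcal L(H)}\le C$ for $\ell\in\{1,2\}$, with $C$ independent of $h$.
   Context: $(H,(\cdot,\cdot)_H,\|\cdot\|_H)$ is a real Hilbert space with complexification $H_{\mathbb C}$; $C$ denotes generic constants independent of $h$. Condition (A): $A:\mathrm{dom}(A)\subset H\to H$ and $A_\ell:\mathrm{dom}(A_\ell)\subset H\to H$ ($\ell=1,2$) are linear with $A=A_1+A_2$ on $\mathrm{dom}(A_1)\cap\mathrm{dom}(A_2)\subseteq\mathrm{dom}(A)$; $A$ is densely defined, positive and sectorial: there is $\varphi\in(0,\pi/2)$ such that $0$ and $S_\varphi=\{\lambda\in\mathbb C:\varphi<|\arg\lambda|\le\pi\}$ lie in the resolvent set and $\|(A-\lambda I)^{-1}\|_{\mathcal L(H_{\mathbb C})}\le C/|\lambda|$ on $S_\varphi$; $A_\ell A^{-1}$ is a well-defined bounded operator on $H$. Condition (P): $V_h\subset H$ ($h\in I\subset(0,\infty)$) are finite-dimensional subspaces and $P_h:H\to V_h$ bounded projections with $\|(I-P_h)v\|_H\le Ch^2\|Av\|_H$ for $v\in\mathrm{dom}(A)$. Condition (Ah): $V_h$ carries an inner product with norm $\|\cdot\|_{V_h}$, $\|v_h\|_H\le C\|v_h\|_{V_h}$, and $A_h,A_{h,1},A_{h,2}\in\mathcal L(V_h)$ satisfy for all $v_h,w_h\in V_h$, $\ell=1,2$: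 (a) $(A_hv_h,v_h)_H\ge C\|v_h\|^2_{V_h}$; (b) $|(A_hv_h,w_h)_H|\le C\|v_h\|_{V_h}\|w_h\|_{V_h}$; (c) $A_h=A_{h,1}+A_{h,2}$; (d) $(A_{h,\ell}v_h,v_h)_H\ge0$; (e) $\|A_{h,\ell}P_h\|_{\mathcal L(H)}\le Ch^{-2}$; (f) $\|(P_hA_\ell-A_{h,\ell}P_h)v\|_H\le C\|Av\|_H$ for $v\in\mathrm{dom}(A)$; (g) $\|A^{-1}-A_h^{-1}P_h\|_{\mathcal L(H)}\le Ch^2$. Operators on $V_h$ composed with $P_h$ are regarded as operators on $H$; $\|\cdot\|_{\mathcal L(H)}$ is the operator norm with respect to $\|\cdot\|_H$. *)

theory Defs
  imports "HOL-Analysis.Analysis"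
begin

text \<open>A real Hilbert space H is modelled by a type of class real_inner + complete_space.
  Its complexification H_C is modelled by pairs (u,v) standing for u + i v; the product norm
  of Isabelle is sqrt(norm u ^ 2 + norm v ^ 2), the Hilbert norm of the complexification.\<close>

definition lin_on :: "'a::real_vector set \<Rightarrow> ('a \<Rightarrow> 'b::real_vector) \<Rightarrow> bool" where
  "lin_on D T \<longleftrightarrow> subspace D \<and>
     (\<forall>x\<in>D. \<forall>y\<in>D. T (x + y) = T x + T y) \<and> (\<forall>c. \<forall>x\<in>D. T (c *\<^sub>R x) = c *\<^sub>R T x)"

text \<open>The complexified operator A - lambda I acting on u + i v, written as a pair.\<close>
definition cshift :: "('a::real_vector \<Rightarrow> 'a) \<Rightarrow> complex \<Rightarrow> 'a \<times> 'a \<Rightarrow> 'a \<times> 'a" where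
  "cshift A \<mu> z = (A (fst z) - Re \<mu> *\<^sub>R fst z + Im \<mu> *\<^sub>R snd z,
                    A (snd z) - Re \<mu> *\<^sub>R snd z - Im \<mu> *\<^sub>R fst z)"

definition sector :: "real \<Rightarrow> complex set" where
  "sector \<phi> = {\<mu>. \<phi> < \<bar>Arg \<mu>\<bar> \<and> \<bar>Arg \<mu>\<bar> \<le> pi}"

definition opinv :: "'a set \<Rightarrow> ('a \<Rightarrow> 'b) \<Rightarrow> 'b \<Rightarrow> 'a" where
  "opinv D T = the_inv_into D T"

definition condA :: "('a::{real_inner,complete_space} \<Rightarrow> 'a) \<Rightarrow> 'a set \<Rightarrow>
    ('a \<Rightarrow> 'a) \<Rightarrow> 'a set \<Rightarrow> ('a \<Rightarrow> 'a) \<Rightarrow> 'a set \<Rightarrow> bool" where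
  "condA A DA A1 DA1 A2 DA2 \<longleftrightarrow>
     lin_on DA A \<and> lin_on DA1 A1 \<and> lin_on DA2 A2 \<and>
     DA1 \<inter> DA2 \<subseteq> DA \<and> (\<forall>v \<in> DA1 \<inter> DA2. A v = A1 v + A2 v) \<and>
     closure DA = UNIV \<and>
     (\<forall>v\<in>DA. inner (A v) v \<ge> 0) \<and>
     \<comment> \<open>0 lies in the resolvent set\<close>
     bij_betw A DA UNIV \<and> (\<exists>K. \<forall>x. norm (opinv DA A x) \<le> K * norm x) \<and>
     \<comment> \<open>sectoriality\<close>
     (\<exists>\<phi> C. 0 < \<phi> \<and> \<phi> < pi / 2 \<and>
        (\<forall>\<mu>\<in>sector \<phi>. bij_betw (cshift A \<mu>) (DA \<times> DA) UNIV \<and>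
           (\<forall>w. norm (opinv (DA \<times> DA) (cshift A \<mu>) w) \<le> C / cmod \<mu> * norm w))) \<and>
     \<comment> \<open>A_l A^{-1} is a well-defined bounded operator on H\<close>
     (\<forall>x. opinv DA A x \<in> DA1 \<and> opinv DA A x \<in> DA2) \<and>
     (\<exists>K. \<forall>x. norm (A1 (opinv DA A x)) \<le> K * norm x \<and> norm (A2 (opinv DA A x)) \<le> K * norm x)"

definition condP :: "real set \<Rightarrow> (real \<Rightarrow> 'a::{real_inner,complete_space} set) \<Rightarrow>
    (real \<Rightarrow> 'a \<Rightarrow> 'a) \<Rightarrow> ('a \<Rightarrow> 'a) \<Rightarrow> 'a set \<Rightarrow> bool" where
  "condP I V P A DA \<longleftrightarrow>
     I \<subseteq> {0<..} \<and>
     (\<forall>h\<in>I. subspace (V h) \<and> (\<exists>B. finite B \<and> V h = span B) \<and>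
        bounded_linear (P h) \<and> range (P h) \<subseteq> V h \<and> (\<forall>v\<in>V h. P h v = v)) \<and>
     (\<exists>C. \<forall>h\<in>I. \<forall>v\<in>DA. norm (v - P h v) \<le> C * h^2 * norm (A v))"

definition inner_on :: "'a::real_vector set \<Rightarrow> ('a \<Rightarrow> 'a \<Rightarrow> real) \<Rightarrow> bool" where
  "inner_on S ip \<longleftrightarrow>
     (\<forall>x\<in>S. \<forall>y\<in>S. ip x y = ip y x) \<and>
     (\<forall>x\<in>S. \<forall>y\<in>S. \<forall>z\<in>S. ip (x + y) z = ip x z + ip y z) \<and>
     (\<forall>c. \<forall>x\<in>S. \<forall>y\<in>S. ip (c *\<^sub>R x) y = c * ip x y) \<and>
     (\<forall>x\<in>S. x \<noteq> 0 \<longrightarrow> ip x x > 0)"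

definition ipnorm :: "('a \<Rightarrow> 'a \<Rightarrow> real) \<Rightarrow> 'a \<Rightarrow> real" where
  "ipnorm ip v = sqrt (ip v v)"

definition endo_on :: "'a::real_vector set \<Rightarrow> ('a \<Rightarrow> 'a) \<Rightarrow> bool" where
  "endo_on S T \<longleftrightarrow> lin_on S T \<and> T ` S \<subseteq> S"

definition condAh :: "real set \<Rightarrow> (real \<Rightarrow> 'a::{real_inner,complete_space} set) \<Rightarrow>
    (real \<Rightarrow> 'a \<Rightarrow> 'a) \<Rightarrow> (real \<Rightarrow> 'a \<Rightarrow> 'a \<Rightarrow> real) \<Rightarrow>
    (real \<Rightarrow> 'a \<Rightarrow> 'a) \<Rightarrow> (real \<Rightarrow> 'a \<Rightarrow> 'a) \<Rightarrow> (real \<Rightarrow> 'a \<Rightarrow> 'a) \<Rightarrow>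
    ('a \<Rightarrow> 'a) \<Rightarrow> 'a set \<Rightarrow> ('a \<Rightarrow> 'a) \<Rightarrow> ('a \<Rightarrow> 'a) \<Rightarrow> bool" where
  "condAh I V P ip Ah Ah1 Ah2 A DA A1 A2 \<longleftrightarrow>
     (\<forall>h\<in>I. inner_on (V h) (ip h) \<and> endo_on (V h) (Ah h) \<and>
        endo_on (V h) (Ah1 h) \<and> endo_on (V h) (Ah2 h)) \<and>
     (\<exists>C. \<forall>h\<in>I. \<forall>v\<in>V h. norm v \<le> C * ipnorm (ip h) v) \<and>
     \<comment> \<open>(a)\<close>
     (\<exists>C>0. \<forall>h\<in>I. \<forall>v\<in>V h. inner (Ah h v) v \<ge> C * (ipnorm (ip h) v)^2) \<and>
     \<comment> \<open>(b)\<close>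
     (\<exists>C. \<forall>h\<in>I. \<forall>v\<in>V h. \<forall>w\<in>V h.
        \<bar>inner (Ah h v) w\<bar> \<le> C * ipnorm (ip h) v * ipnorm (ip h) w) \<and>
     \<comment> \<open>(c)\<close>
     (\<forall>h\<in>I. \<forall>v\<in>V h. Ah h v = Ah1 h v + Ah2 h v) \<and>
     \<comment> \<open>(d)\<close>
     (\<forall>h\<in>I. \<forall>v\<in>V h. inner (Ah1 h v) v \<ge> 0 \<and> inner (Ah2 h v) v \<ge> 0) \<and>
     \<comment> \<open>(e)\<close>
     (\<exists>C. \<forall>h\<in>I. \<forall>x. norm (Ah1 h (P h x)) \<le> C / h^2 * norm x \<and>
                      norm (Ah2 h (P h x)) \<le> C / h^2 * norm x) \<and>
     \<comment> \<open>(f)\<close>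
     (\<exists>C. \<forall>h\<in>I. \<forall>v\<in>DA. norm (P h (A1 v) - Ah1 h (P h v)) \<le> C * norm (A v) \<and>
                          norm (P h (A2 v) - Ah2 h (P h v)) \<le> C * norm (A v)) \<and>
     \<comment> \<open>(g)\<close>
     (\<exists>C. \<forall>h\<in>I. \<forall>x. norm (opinv DA A x - opinv (V h) (Ah h) (P h x)) \<le> C * h^2 * norm x)"

end

theory Submission
  imports Defs
begin

text \<open>The key point is that the projections P_h are uniformly bounded, which is not among the
  hypotheses. Given x, solve y + h^2 A y = x with the resolvent at -1/h^2; positivity of A bounds
  y and h^2 A y by x. Then P_h y is close to y by (P), and h^2 P_h A_l y is close to h^2 A_hl P_h y
  by (f), which is bounded by (e). With this, (f) gives A_hl P_h A^-1 = P_h A_l A^-1 + O(1),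
  hence (i). For (ii), write A_h^-1 P_h = P_h A^-1 + O(h^2) by (g) and absorb the error term
  with (e); A_h is invertible on V_h by coercivity (a), as V_h is finite-dimensional.\<close>

lemma linear_inj_on_finite_span_imp_surj_on:
  fixes g :: "'a::real_vector \<Rightarrow> 'a"
  assumes g: "linear g" and V: "V = span B\<^sub>0" "finite B\<^sub>0"
    and inj: "inj_on g V" and into: "g ` V \<subseteq> V"
  shows "g ` V = V"
proof (rule ccontr)
  assume "g ` V \<noteq> V"
  with into obtain y where y: "y \<in> V" "y \<notin> g ` V" by blast
  obtain B where B: "B \<subseteq> V" "independent B" "V \<subseteq> span B"
    by (rule maximal_independent_subset)
  have span_B: "span B = V"
    using span_subspace[OF B(1,3)] V(1) by simp
  have "finite B"
    using independent_span_bound[OF V(2) B(2)] B(1) V(1) by simp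
  have inj_B: "inj_on g (span B)"
    using inj span_B by simp
  have "span (g ` B) = g ` V"
    using linear_span_image[OF g] span_B by simp
  with y have y_new: "y \<notin> span (g ` B)" by simp
  have "independent (g ` B)"
    using linear_independent_injective_image[OF g B(2) inj_B] .
  with y_new have ind: "independent (insert y (g ` B))"
    by (rule independent_insertI)
  have sub: "insert y (g ` B) \<subseteq> span B"
    using y(1) into span_B span_base by blast
  have "card (insert y (g ` B)) \<le> card B"
    using independent_span_bound[OF \<open>finite B\<close> ind sub] by simp
  moreover have "card (insert y (g ` B)) = Suc (card B)"
  proof -
    have "y \<notin> g ` B"
      by (metis y_new span_base)
    moreover have "card (g ` B) = card B"
      using card_image inj_on_subset[OF inj_B span_superset] by blast
    ultimately show ?thesis
      using \<open>finite B\<close> by simp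
  qed
  ultimately show False by simp
qed

lemma accretive_resolvent_norm_le:
  fixes a x y :: "'a::real_inner"
  assumes "inner a y \<ge> 0" and "s > 0" and "a + s *\<^sub>R y = s *\<^sub>R x"
  shows "norm y \<le> norm x"
proof -
  have "s * (norm y)\<^sup>2 \<le> inner a y + s * (norm y)\<^sup>2"
    using assms(1) by simp
  also have "\<dots> = s * inner x y"
    by (metis assms(3) inner_add_left inner_scaleR_left power2_norm_eq_inner)
  also have "\<dots> \<le> s * (norm x * norm y)"
    using assms(2) by (simp add: norm_cauchy_schwarz)
  finally have "norm y * norm y \<le> norm x * norm y"
    using assms(2) by (simp add: power2_eq_square)
  then show ?thesis
    by (cases "norm y = 0") auto
qed

lemma le_max_zero_mult: "(a::real) \<le> C * b \<Longrightarrow> 0 \<le> b \<Longrightarrow> a \<le> max C 0 * b"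
  by (smt (verit) mult_right_mono max.cobounded1)

lemma neg_real_in_sector:
  assumes "\<phi> < pi" and "s > 0"
  shows "complex_of_real (- s) \<in> sector \<phi>"
proof -
  have "Arg (complex_of_real (- s)) = pi"
    using assms(2) by (subst Arg_of_real) simp
  then show ?thesis
    using assms(1) unfolding sector_def by simp
qed

locale galerkin_splitting =
  fixes A A1 A2 :: "'a::{real_inner,complete_space} \<Rightarrow> 'a"
    and DA DA1 DA2 :: "'a set"
    and I :: "real set" and V :: "real \<Rightarrow> 'a set" and P :: "real \<Rightarrow> 'a \<Rightarrow> 'a"
    and ip :: "real \<Rightarrow> 'a \<Rightarrow> 'a \<Rightarrow> real"
    and Ah Ah1 Ah2 :: "real \<Rightarrow> 'a \<Rightarrow> 'a"
  assumes A_cond: "condA A DA A1 DA1 A2 DA2"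
    and P_cond: "condP I V P A DA"
    and Ah_cond: "condAh I V P ip Ah Ah1 Ah2 A DA A1 A2"
begin

abbreviation Ainv :: "'a \<Rightarrow> 'a" where
  "Ainv \<equiv> opinv DA A"

abbreviation Ahinv :: "real \<Rightarrow> 'a \<Rightarrow> 'a" where
  "Ahinv h \<equiv> opinv (V h) (Ah h)"

lemma A_bij: "bij_betw A DA UNIV"
  using A_cond unfolding condA_def by blast

lemma Ainv_in_domain: "Ainv x \<in> DA"
  using bij_betw_apply[OF bij_betw_the_inv_into[OF A_bij]] unfolding opinv_def by simp

lemma A_Ainv: "A (Ainv x) = x"
  using f_the_inv_into_f_bij_betw[OF A_bij] unfolding opinv_def by simp

lemma Ainv_A: "v \<in> DA \<Longrightarrow> Ainv (A v) = v"
  using the_inv_into_f_f A_bij unfolding opinv_def bij_betw_def by metis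

lemma A_split: "v \<in> DA \<Longrightarrow> A v = A1 v + A2 v"
proof -
  assume "v \<in> DA"
  moreover have "Ainv (A v) \<in> DA1 \<inter> DA2"
    using A_cond unfolding condA_def by blast
  ultimately show ?thesis
    using A_cond Ainv_A unfolding condA_def by metis
qed

lemma A_accretive: "v \<in> DA \<Longrightarrow> inner (A v) v \<ge> 0"
  using A_cond unfolding condA_def by blast

lemma A_resolvent_decomposition:
  assumes "t > 0"
  obtains y where "y \<in> DA" "x = y + t *\<^sub>R A y" "norm y \<le> norm x" "t * norm (A y) \<le> 2 * norm x"
proof -
  define s where "s = 1 / t"
  have "s > 0"
    using assms by (simp add: s_def)
  obtain \<phi> where "0 < \<phi>" "\<phi> < pi / 2"
    and sectorial: "\<forall>\<mu>\<in>sector \<phi>. bij_betw (cshift A \<mu>) (DA \<times> DA) UNIV"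
    using A_cond unfolding condA_def by blast
  then have "complex_of_real (- s) \<in> sector \<phi>"
    using neg_real_in_sector \<open>s > 0\<close> by simp
  with sectorial have "bij_betw (cshift A (complex_of_real (- s))) (DA \<times> DA) UNIV"
    by blast
  then have "(s *\<^sub>R x, 0) \<in> cshift A (complex_of_real (- s)) ` (DA \<times> DA)"
    by (simp add: bij_betw_def)
  \<comment> \<open>at the real point -s the complexified operator acts on each component as A + s\<close>
  then obtain y where y: "y \<in> DA" "A y + s *\<^sub>R y = s *\<^sub>R x"
    by (auto simp: cshift_def)
  have y_le: "norm y \<le> norm x"
    using accretive_resolvent_norm_le[OF A_accretive[OF y(1)] \<open>s > 0\<close> y(2)] .
  have "A y = s *\<^sub>R (x - y)"
    using y(2) by (simp add: eq_diff_eq scaleR_diff_right)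
  then have t_Ay: "t *\<^sub>R A y = x - y"
    using assms by (simp add: s_def)
  show thesis
  proof (rule that[OF y(1)])
    show "x = y + t *\<^sub>R A y"
      using t_Ay by simp
    have "t * norm (A y) = norm (x - y)"
      using t_Ay assms by (metis norm_scaleR abs_of_pos)
    then show "t * norm (A y) \<le> 2 * norm x"
      using y_le norm_triangle_ineq4[of x y] by linarith
  qed (fact y_le)
qed

lemma h_pos: "h \<in> I \<Longrightarrow> 0 < h"
  using P_cond unfolding condP_def by auto

lemma P_linear: "h \<in> I \<Longrightarrow> linear (P h)"
  using P_cond bounded_linear.linear unfolding condP_def by blast

lemma P_in_V: "h \<in> I \<Longrightarrow> P h x \<in> V h"
  using P_cond unfolding condP_def by blast

lemma P_idem: "h \<in> I \<Longrightarrow> v \<in> V h \<Longrightarrow> P h v = v"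
  using P_cond unfolding condP_def by blast

lemma Ah_split: "h \<in> I \<Longrightarrow> v \<in> V h \<Longrightarrow> Ah h v = Ah1 h v + Ah2 h v"
  using Ah_cond unfolding condAh_def by blast

lemma Ah_endo: "h \<in> I \<Longrightarrow> endo_on (V h) (Ah h) \<and> endo_on (V h) (Ah1 h) \<and> endo_on (V h) (Ah2 h)"
  using Ah_cond unfolding condAh_def by blast

lemma A_split_Ainv_bounded:
  "\<exists>C. \<forall>x. norm (A1 (Ainv x)) \<le> C * norm x \<and> norm (A2 (Ainv x)) \<le> C * norm x"
  using A_cond unfolding condA_def by (elim conjE) assumption

lemma P_approximation:
  obtains CP where "CP \<ge> 0"
    "\<And>h v. h \<in> I \<Longrightarrow> v \<in> DA \<Longrightarrow> norm (v - P h v) \<le> CP * (h\<^sup>2 * norm (A v))"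
proof -
  obtain C where "\<forall>h\<in>I. \<forall>v\<in>DA. norm (v - P h v) \<le> C * (h\<^sup>2 * norm (A v))"
    using P_cond unfolding condP_def by (auto simp: mult.assoc)
  then show thesis
    by (intro that[of "max C 0"]) (auto intro!: le_max_zero_mult)
qed

lemma Ah_split_P_bounded:
  obtains Ce where "Ce \<ge> 0"
    "\<And>h x. h \<in> I \<Longrightarrow> h\<^sup>2 * norm (Ah1 h (P h x)) \<le> Ce * norm x"
    "\<And>h x. h \<in> I \<Longrightarrow> h\<^sup>2 * norm (Ah2 h (P h x)) \<le> Ce * norm x"
proof -
  have "\<exists>C. \<forall>h\<in>I. \<forall>x. norm (Ah1 h (P h x)) \<le> C / h\<^sup>2 * norm x \<and>
      norm (Ah2 h (P h x)) \<le> C / h\<^sup>2 * norm x"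
    using Ah_cond unfolding condAh_def by (elim conjE) assumption
  then obtain C where C: "\<forall>h\<in>I. \<forall>x. norm (Ah1 h (P h x)) \<le> C / h\<^sup>2 * norm x \<and>
      norm (Ah2 h (P h x)) \<le> C / h\<^sup>2 * norm x"
    by blast
  have "h\<^sup>2 * norm (Ah1 h (P h x)) \<le> C * norm x \<and> h\<^sup>2 * norm (Ah2 h (P h x)) \<le> C * norm x"
    if h: "h \<in> I" for h x
  proof -
    have "0 < h\<^sup>2"
      using h_pos[OF h] by simp
    moreover have "norm (Ah1 h (P h x)) \<le> C * norm x / h\<^sup>2" "norm (Ah2 h (P h x)) \<le> C * norm x / h\<^sup>2"
      using C h by auto
    ultimately show ?thesis
      by (simp add: pos_le_divide_eq mult.commute)
  qed
  then show thesis
    by (intro that[of "max C 0"]) (auto intro!: le_max_zero_mult)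
qed

lemma Ah_split_consistency:
  "\<exists>C. \<forall>h\<in>I. \<forall>v\<in>DA. norm (P h (A1 v) - Ah1 h (P h v)) \<le> C * norm (A v) \<and>
                    norm (P h (A2 v) - Ah2 h (P h v)) \<le> C * norm (A v)"
  using Ah_cond unfolding condAh_def by (elim conjE) assumption

lemma Ahinv_P_error: "\<exists>C. \<forall>h\<in>I. \<forall>x. norm (Ainv x - Ahinv h (P h x)) \<le> C * h\<^sup>2 * norm x"
  using Ah_cond unfolding condAh_def by (elim conjE) assumption

lemma Ah_coercive: "\<exists>C>0. \<forall>h\<in>I. \<forall>v\<in>V h. inner (Ah h v) v \<ge> C * (ipnorm (ip h) v)\<^sup>2"
  using Ah_cond unfolding condAh_def by (elim conjE) assumption

lemma V_norm_le_ipnorm: "\<exists>C. \<forall>h\<in>I. \<forall>v\<in>V h. norm v \<le> C * ipnorm (ip h) v"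
  using Ah_cond unfolding condAh_def by (elim conjE) assumption

lemma P_A_split_bounded:
  obtains C where "C \<ge> 0"
    "\<And>h y. h \<in> I \<Longrightarrow> y \<in> DA \<Longrightarrow> h\<^sup>2 * norm (P h (A1 y)) \<le> C * (norm y + h\<^sup>2 * norm (A y))"
    "\<And>h y. h \<in> I \<Longrightarrow> y \<in> DA \<Longrightarrow> h\<^sup>2 * norm (P h (A2 y)) \<le> C * (norm y + h\<^sup>2 * norm (A y))"
proof -
  obtain Ce where Ce: "Ce \<ge> 0"
    "\<And>h x. h \<in> I \<Longrightarrow> h\<^sup>2 * norm (Ah1 h (P h x)) \<le> Ce * norm x"
    "\<And>h x. h \<in> I \<Longrightarrow> h\<^sup>2 * norm (Ah2 h (P h x)) \<le> Ce * norm x"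
    using Ah_split_P_bounded by blast
  obtain Cf where Cf:
    "\<And>h v. h \<in> I \<Longrightarrow> v \<in> DA \<Longrightarrow> norm (P h (A1 v) - Ah1 h (P h v)) \<le> Cf * norm (A v)"
    "\<And>h v. h \<in> I \<Longrightarrow> v \<in> DA \<Longrightarrow> norm (P h (A2 v) - Ah2 h (P h v)) \<le> Cf * norm (A v)"
    using Ah_split_consistency by blast
  define C where "C = max Ce Cf"
  have component: "h\<^sup>2 * norm (P h (B y)) \<le> C * (norm y + h\<^sup>2 * norm (A y))"
    if e: "h\<^sup>2 * norm (Bh (P h y)) \<le> Ce * norm y"
      and f: "norm (P h (B y) - Bh (P h y)) \<le> Cf * norm (A y)" for h y B Bh
  proof -
    have "norm (P h (B y)) \<le> norm (Bh (P h y)) + Cf * norm (A y)"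
      using f norm_triangle_ineq2[of "P h (B y)" "Bh (P h y)"] by linarith
    then have "h\<^sup>2 * norm (P h (B y)) \<le> h\<^sup>2 * (norm (Bh (P h y)) + Cf * norm (A y))"
      by (rule mult_left_mono) simp
    also have "\<dots> = h\<^sup>2 * norm (Bh (P h y)) + Cf * (h\<^sup>2 * norm (A y))"
      by (simp add: algebra_simps)
    also have "\<dots> \<le> Ce * norm y + Cf * (h\<^sup>2 * norm (A y))"
      using e by simp
    also have "\<dots> \<le> C * norm y + C * (h\<^sup>2 * norm (A y))"
      unfolding C_def by (intro add_mono mult_right_mono) auto
    finally show ?thesis
      by (simp add: distrib_left)
  qed
  show thesis
  proof (rule that)
    show "C \<ge> 0"
      using Ce(1) by (simp add: C_def)
  next
    fix h y assume "h \<in> I" "y \<in> DA"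
    then show "h\<^sup>2 * norm (P h (A1 y)) \<le> C * (norm y + h\<^sup>2 * norm (A y))"
      and "h\<^sup>2 * norm (P h (A2 y)) \<le> C * (norm y + h\<^sup>2 * norm (A y))"
      using component Ce(2,3) Cf(1,2) by blast+
  qed
qed

lemma P_uniformly_bounded:
  obtains K where "K \<ge> 0" "\<And>h x. h \<in> I \<Longrightarrow> norm (P h x) \<le> K * norm x"
proof -
  obtain CP where CP: "CP \<ge> 0"
    "\<And>h v. h \<in> I \<Longrightarrow> v \<in> DA \<Longrightarrow> norm (v - P h v) \<le> CP * (h\<^sup>2 * norm (A v))"
    using P_approximation by blast
  obtain C where C: "C \<ge> 0"
    "\<And>h y. h \<in> I \<Longrightarrow> y \<in> DA \<Longrightarrow> h\<^sup>2 * norm (P h (A1 y)) \<le> C * (norm y + h\<^sup>2 * norm (A y))"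
    "\<And>h y. h \<in> I \<Longrightarrow> y \<in> DA \<Longrightarrow> h\<^sup>2 * norm (P h (A2 y)) \<le> C * (norm y + h\<^sup>2 * norm (A y))"
    using P_A_split_bounded by blast
  have "norm (P h x) \<le> (1 + 2 * CP + 6 * C) * norm x" if h: "h \<in> I" for h x
  proof -
    obtain y where y: "y \<in> DA" "x = y + h\<^sup>2 *\<^sub>R A y" "norm y \<le> norm x"
      and hAy: "h\<^sup>2 * norm (A y) \<le> 2 * norm x"
      using A_resolvent_decomposition[of "h\<^sup>2" x] h_pos[OF h] by auto
    have C_bound: "C * (norm y + h\<^sup>2 * norm (A y)) \<le> 3 * C * norm x"
      using mult_left_mono[OF add_mono[OF y(3) hAy] C(1)] by simp
    have "norm (P h y) \<le> norm y + norm (y - P h y)"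
      using norm_triangle_sub[of "P h y" y] by (simp add: norm_minus_commute)
    also have "\<dots> \<le> norm x + CP * (2 * norm x)"
      using y(3) CP(2)[OF h y(1)] mult_left_mono[OF hAy CP(1)] by linarith
    finally have Py: "norm (P h y) \<le> (1 + 2 * CP) * norm x"
      by (simp add: algebra_simps)
    have Px: "P h x = P h y + h\<^sup>2 *\<^sub>R P h (A1 y) + h\<^sup>2 *\<^sub>R P h (A2 y)"
      using y(2) A_split[OF y(1)] P_linear[OF h] by (simp add: linear_add linear_scale scaleR_add_right)
    have "norm (P h x) \<le> norm (P h y) + norm (h\<^sup>2 *\<^sub>R P h (A1 y)) + norm (h\<^sup>2 *\<^sub>R P h (A2 y))"
      unfolding Px using norm_triangle_ineq[of "P h y + h\<^sup>2 *\<^sub>R P h (A1 y)" "h\<^sup>2 *\<^sub>R P h (A2 y)"]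
        norm_triangle_ineq[of "P h y" "h\<^sup>2 *\<^sub>R P h (A1 y)"] by linarith
    also have "\<dots> = norm (P h y) + h\<^sup>2 * norm (P h (A1 y)) + h\<^sup>2 * norm (P h (A2 y))"
      by simp
    also have "\<dots> \<le> (1 + 2 * CP) * norm x + 3 * C * norm x + 3 * C * norm x"
      using Py C(2,3)[OF h y(1)] C_bound by linarith
    finally show ?thesis
      by (simp add: algebra_simps)
  qed
  then show thesis
    using that[of "1 + 2 * CP + 6 * C"] CP(1) C(1) by simp
qed

lemma Ah_split_P_Ainv_bounded:
  obtains C where
    "\<And>h x. h \<in> I \<Longrightarrow> norm (Ah1 h (P h (Ainv x))) \<le> C * norm x"
    "\<And>h x. h \<in> I \<Longrightarrow> norm (Ah2 h (P h (Ainv x))) \<le> C * norm x"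
proof -
  obtain K where K: "K \<ge> 0" "\<And>h x. h \<in> I \<Longrightarrow> norm (P h x) \<le> K * norm x"
    using P_uniformly_bounded by blast
  obtain KA where KA:
    "\<And>x. norm (A1 (Ainv x)) \<le> KA * norm x" "\<And>x. norm (A2 (Ainv x)) \<le> KA * norm x"
    using A_split_Ainv_bounded by blast
  obtain Cf where Cf:
    "\<And>h v. h \<in> I \<Longrightarrow> v \<in> DA \<Longrightarrow> norm (P h (A1 v) - Ah1 h (P h v)) \<le> Cf * norm (A v)"
    "\<And>h v. h \<in> I \<Longrightarrow> v \<in> DA \<Longrightarrow> norm (P h (A2 v) - Ah2 h (P h v)) \<le> Cf * norm (A v)"
    using Ah_split_consistency by blast
  have component: "norm b \<le> (K * KA + Cf) * norm x"
    if h: "h \<in> I" and a: "norm a \<le> KA * norm x" and b: "norm (P h a - b) \<le> Cf * norm x"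
    for h x a b
  proof -
    have "norm b \<le> norm (P h a) + Cf * norm x"
      using b norm_triangle_ineq3[of "P h a" b] by linarith
    also have "\<dots> \<le> K * (KA * norm x) + Cf * norm x"
      using K(2)[OF h, of a] mult_left_mono[OF a K(1)] by linarith
    finally show ?thesis
      by (simp add: algebra_simps)
  qed
  show thesis
  proof (rule that)
    fix h x assume h: "h \<in> I"
    show "norm (Ah1 h (P h (Ainv x))) \<le> (K * KA + Cf) * norm x"
      using Cf(1)[OF h Ainv_in_domain] by (intro component[OF h KA(1)]) (simp add: A_Ainv)
    show "norm (Ah2 h (P h (Ainv x))) \<le> (K * KA + Cf) * norm x"
      using Cf(2)[OF h Ainv_in_domain] by (intro component[OF h KA(2)]) (simp add: A_Ainv)
  qed
qed

lemma Ah_P_Ainv_bounded: "\<exists>C. \<forall>h\<in>I. \<forall>x. norm (Ah h (P h (Ainv x))) \<le> C * norm x"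
proof -
  obtain C where C: "\<And>h x. h \<in> I \<Longrightarrow> norm (Ah1 h (P h (Ainv x))) \<le> C * norm x"
    "\<And>h x. h \<in> I \<Longrightarrow> norm (Ah2 h (P h (Ainv x))) \<le> C * norm x"
    using Ah_split_P_Ainv_bounded by blast
  have "norm (Ah h (P h (Ainv x))) \<le> 2 * C * norm x" if h: "h \<in> I" for h x
    unfolding Ah_split[OF h P_in_V[OF h]]
    using C[OF h, of x] norm_triangle_ineq[of "Ah1 h (P h (Ainv x))" "Ah2 h (P h (Ainv x))"]
    by linarith
  then show ?thesis
    by blast
qed

lemma Ah_inj_on:
  assumes h: "h \<in> I"
  shows "inj_on (Ah h) (V h)"
proof -
  obtain Ca where "Ca > 0" and coercive: "\<forall>h\<in>I. \<forall>v\<in>V h. inner (Ah h v) v \<ge> Ca * (ipnorm (ip h) v)\<^sup>2"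
    using Ah_coercive by blast
  obtain Cn where norm_equiv: "\<forall>h\<in>I. \<forall>v\<in>V h. norm v \<le> Cn * ipnorm (ip h) v"
    using V_norm_le_ipnorm by blast
  have lin: "lin_on (V h) (Ah h)"
    using Ah_endo[OF h] unfolding endo_on_def by blast
  have kernel: "v = 0" if v: "v \<in> V h" "Ah h v = 0" for v
  proof -
    have "Ca * (ipnorm (ip h) v)\<^sup>2 \<le> inner (Ah h v) v"
      using coercive h v(1) by blast
    then have "ipnorm (ip h) v = 0"
      using \<open>Ca > 0\<close> v(2) by (simp add: mult_le_0_iff)
    moreover have "norm v \<le> Cn * ipnorm (ip h) v"
      using norm_equiv h v(1) by blast
    ultimately show "v = 0"
      by simp
  qed
  show ?thesis
  proof (rule inj_onI)
    fix a b assume ab: "a \<in> V h" "b \<in> V h" and eq: "Ah h a = Ah h b"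
    have diff: "a - b \<in> V h"
      using lin ab unfolding lin_on_def by (simp add: subspace_diff)
    have "Ah h a = Ah h (a - b) + Ah h b"
      using lin diff ab(2) unfolding lin_on_def by (metis diff_add_cancel)
    with eq have "Ah h (a - b) = 0"
      by simp
    then show "a = b"
      using kernel[OF diff] by simp
  qed
qed

lemma Ah_surj_on:
  assumes h: "h \<in> I"
  shows "Ah h ` V h = V h"
proof -
  have lin: "lin_on (V h) (Ah h)" and into: "Ah h ` V h \<subseteq> V h"
    using Ah_endo[OF h] unfolding endo_on_def by blast+
  obtain B where B: "finite B" "V h = span B"
    using P_cond h unfolding condP_def by blast
  \<comment> \<open>Ah h is only linear on V h; composing with P h extends it linearly to the whole space\<close>
  define g where "g = Ah h \<circ> P h"
  have g_V: "g v = Ah h v" if "v \<in> V h" for v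
    using P_idem[OF h that] by (simp add: g_def)
  have "linear g"
  proof (rule linearI)
    show "g (x + y) = g x + g y" for x y
      using lin P_in_V[OF h] unfolding lin_on_def g_def
      by (simp add: linear_add[OF P_linear[OF h]])
    show "g (c *\<^sub>R x) = c *\<^sub>R g x" for c x
      using lin P_in_V[OF h] unfolding lin_on_def g_def
      by (simp add: linear_scale[OF P_linear[OF h]])
  qed
  moreover have "inj_on g (V h)"
    using Ah_inj_on[OF h] inj_on_cong[of "V h" g "Ah h"] g_V by simp
  moreover have g_image: "g ` V h = Ah h ` V h"
    using g_V by simp
  with into have "g ` V h \<subseteq> V h"
    by simp
  ultimately have "g ` V h = V h"
    by (rule linear_inj_on_finite_span_imp_surj_on[OF _ B(2,1)])
  with g_image show ?thesis
    by simp
qed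

lemma Ahinv_in_V: "h \<in> I \<Longrightarrow> y \<in> V h \<Longrightarrow> Ahinv h y \<in> V h"
  using the_inv_into_into[OF Ah_inj_on _ subset_refl] Ah_surj_on unfolding opinv_def by blast

lemma Ah_split_Ahinv_P_bounded:
  "\<exists>C. \<forall>h\<in>I. \<forall>x. norm (Ah1 h (Ahinv h (P h x))) \<le> C * norm x \<and>
                   norm (Ah2 h (Ahinv h (P h x))) \<le> C * norm x"
proof -
  obtain Ce where Ce: "Ce \<ge> 0"
    "\<And>h x. h \<in> I \<Longrightarrow> h\<^sup>2 * norm (Ah1 h (P h x)) \<le> Ce * norm x"
    "\<And>h x. h \<in> I \<Longrightarrow> h\<^sup>2 * norm (Ah2 h (P h x)) \<le> Ce * norm x"
    using Ah_split_P_bounded by blast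
  obtain Cg where Cg: "\<And>h x. h \<in> I \<Longrightarrow> norm (Ainv x - Ahinv h (P h x)) \<le> Cg * h\<^sup>2 * norm x"
    using Ahinv_P_error by blast
  obtain C where C: "\<And>h x. h \<in> I \<Longrightarrow> norm (Ah1 h (P h (Ainv x))) \<le> C * norm x"
    "\<And>h x. h \<in> I \<Longrightarrow> norm (Ah2 h (P h (Ainv x))) \<le> C * norm x"
    using Ah_split_P_Ainv_bounded by blast
  have component: "norm (Bh (Ahinv h (P h x))) \<le> (Ce * Cg + C) * norm x"
    if h: "h \<in> I" and lin: "lin_on (V h) Bh"
      and e: "\<And>z. h\<^sup>2 * norm (Bh (P h z)) \<le> Ce * norm z"
      and c: "norm (Bh (P h (Ainv x))) \<le> C * norm x" for h x Bh
  proof -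
    let ?u = "Ahinv h (P h x)" and ?v = "Ainv x"
    have "?u = P h (?u - ?v) + P h ?v"
      using P_idem[OF h Ahinv_in_V[OF h P_in_V[OF h]]] P_linear[OF h] by (simp add: linear_diff)
    then have "Bh ?u = Bh (P h (?u - ?v)) + Bh (P h ?v)"
      using lin P_in_V[OF h] unfolding lin_on_def by metis
    then have "norm (Bh ?u) \<le> norm (Bh (P h (?u - ?v))) + norm (Bh (P h ?v))"
      by (simp add: norm_triangle_ineq)
    moreover have "norm (Bh (P h (?u - ?v))) \<le> Ce * Cg * norm x"
    proof -
      have "h\<^sup>2 * norm (Bh (P h (?u - ?v))) \<le> Ce * norm (?u - ?v)"
        by (rule e)
      also have "\<dots> \<le> Ce * (Cg * h\<^sup>2 * norm x)"
        using mult_left_mono[OF Cg[OF h, of x] Ce(1)] by (simp add: norm_minus_commute)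
      also have "\<dots> = h\<^sup>2 * (Ce * Cg * norm x)"
        by (simp add: mult_ac)
      finally show ?thesis
        using h_pos[OF h] by simp
    qed
    ultimately show ?thesis
      using c by (simp add: algebra_simps)
  qed
  show ?thesis
  proof (intro exI ballI allI conjI)
    fix h x assume h: "h \<in> I"
    have "lin_on (V h) (Ah1 h)" "lin_on (V h) (Ah2 h)"
      using Ah_endo[OF h] unfolding endo_on_def by blast+
    then show "norm (Ah1 h (Ahinv h (P h x))) \<le> (Ce * Cg + C) * norm x"
      and "norm (Ah2 h (Ahinv h (P h x))) \<le> (Ce * Cg + C) * norm x"
      using component[OF h] Ce(2,3)[OF h] C(1,2)[OF h] by blast+
  qed
qed

end

theorem lemma4p1:
  fixes A A1 A2 :: "'a::{real_inner,complete_space} \<Rightarrow> 'a"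
    and DA DA1 DA2 :: "'a set"
    and I :: "real set" and V :: "real \<Rightarrow> 'a set" and P :: "real \<Rightarrow> 'a \<Rightarrow> 'a"
    and ip :: "real \<Rightarrow> 'a \<Rightarrow> 'a \<Rightarrow> real"
    and Ah Ah1 Ah2 :: "real \<Rightarrow> 'a \<Rightarrow> 'a"
  assumes "condA A DA A1 DA1 A2 DA2"
    and "condP I V P A DA"
    and "condAh I V P ip Ah Ah1 Ah2 A DA A1 A2"
  shows "(\<exists>C. \<forall>h\<in>I. \<forall>x. norm (Ah h (P h (opinv DA A x))) \<le> C * norm x) \<and>
         (\<exists>C. \<forall>h\<in>I. \<forall>x. norm (Ah1 h (opinv (V h) (Ah h) (P h x))) \<le> C * norm x \<and>
                          norm (Ah2 h (opinv (V h) (Ah h) (P h x))) \<le> C * norm x)"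
proof -
  interpret galerkin_splitting A A1 A2 DA DA1 DA2 I V P ip Ah Ah1 Ah2
    using assms by unfold_locales
  show ?thesis
    using Ah_P_Ainv_bounded Ah_split_Ahinv_P_bounded by blast
qed

end
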